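(* Let $p,q$ be integers with $2\le p<q\le5p-1$ and fix $\beta_3\ge0$. Let $r_{\beta_3}$ be the transition curve: for $\beta_1<\beta_1^c$, $r_{\beta_3}(\beta_1)$ is the unique value of $\beta_2$ for which $u\mapsto l(u)=\beta_1u+\beta_2u^p+\beta_3u^q-\tfrac12u\log u-\tfrac12(1-u)\log(1-u)$ has two distinct global maximizers on $[0,1]$. Then $$\lim_{\beta_1\to-\infty}\big|r_{\beta_3}(\beta_1)+\beta_1+\beta_3\big|=0.$$
   Context: Here $\beta_1^c=\tfrac12\log\tfrac{u_0}{1-u_0}-\tfrac{1}{2(p-1)(1-u_0)}+\tfrac{pu_0-(p-1)}{2(p-1)(q-1)(1-u_0)^2}$, where $u_0\in(0,1)$ is the unique solution of $\beta_3=\frac{pu_0-(p-1)}{2q(q-1)(q-p)u_0^{q-1}(1-u_0)^2}$; existence and uniqueness of $r_{\beta_3}(\beta_1)$ for each $\beta_1<\beta_1^c$ is part of the standing setup. *)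

theory Defs
  imports Complex_Main
begin

text \<open>The function l(u) = b1 u + b2 u^p + b3 u^q - 1/2 u log u - 1/2 (1-u) log(1-u) on [0,1].
  Convention: 0 * ln 0 = 0 (in Isabelle ln 0 = 0), the usual continuous extension.\<close>
definition lfun :: "nat \<Rightarrow> nat \<Rightarrow> real \<Rightarrow> real \<Rightarrow> real \<Rightarrow> real \<Rightarrow> real" where
  "lfun p q b1 b2 b3 u = b1 * u + b2 * u ^ p + b3 * u ^ q
      - (1/2) * u * ln u - (1/2) * (1 - u) * ln (1 - u)"

definition is_global_max :: "nat \<Rightarrow> nat \<Rightarrow> real \<Rightarrow> real \<Rightarrow> real \<Rightarrow> real \<Rightarrow> bool" where
  "is_global_max p q b1 b2 b3 u \<longleftrightarrow>
     u \<in> {0..1} \<and> (\<forall>v\<in>{0..1}. lfun p q b1 b2 b3 v \<le> lfun p q b1 b2 b3 u)"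

definition two_maximizers :: "nat \<Rightarrow> nat \<Rightarrow> real \<Rightarrow> real \<Rightarrow> real \<Rightarrow> bool" where
  "two_maximizers p q b1 b2 b3 \<longleftrightarrow>
     (\<exists>u v. u \<noteq> v \<and> is_global_max p q b1 b2 b3 u \<and> is_global_max p q b1 b2 b3 v)"

definition u0 :: "nat \<Rightarrow> nat \<Rightarrow> real \<Rightarrow> real" where
  "u0 p q b3 = (THE u. 0 < u \<and> u < 1 \<and>
      b3 = (real p * u - (real p - 1)) /
           (2 * real q * (real q - 1) * (real q - real p) * u ^ (q - 1) * (1 - u)^2))"

definition beta1c :: "nat \<Rightarrow> nat \<Rightarrow> real \<Rightarrow> real" where
  "beta1c p q b3 = (let u = u0 p q b3 in
      (1/2) * ln (u / (1 - u)) - 1 / (2 * (real p - 1) * (1 - u))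
      + (real p * u - (real p - 1)) / (2 * (real p - 1) * (real q - 1) * (1 - u)^2))"

definition transition_curve :: "nat \<Rightarrow> nat \<Rightarrow> real \<Rightarrow> real \<Rightarrow> real" where
  "transition_curve p q b3 b1 = (THE b2. two_maximizers p q b1 b2 b3)"

end

theory Submission
  imports Defs "HOL-Real_Asymp.Real_Asymp"
begin

text \<open>
  Write l = P + H with P(u) = b1 u + b2 u^p + b3 u^q and H the half binary entropy. At two
  global maximisers u < v the derivative l' vanishes, so l' cannot decrease strictly on [u, v];
  since -H'' = 1/(2u(1-u)) this forces the curvature bound K = p^2 b2^+ + q^2 b3^+ of P to be at
  least 1/(2v) + 1/(2(1-u)). On the other hand, comparing l at a maximiser with l(0) = 0 and
  l(1) = b1 + b2 + b3 shows that for b1 \<rightarrow> -\<infinity> every maximiser lies within e^(1+b1) of 0 or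
  of 1. Two maximisers near the same endpoint, or b2 < 0, would force K to be exponentially
  large in -b1, which the same comparison rules out; so one maximiser is near 0 and one near 1,
  and then
  |l(1)| = |b1 + b2 + b3| = O(e^((1+b1)/2)).
\<close>

definition half_entropy :: "real \<Rightarrow> real" where
  "half_entropy w = - (1/2) * w * ln w - (1/2) * (1 - w) * ln (1 - w)"

definition lpoly :: "nat \<Rightarrow> nat \<Rightarrow> real \<Rightarrow> real \<Rightarrow> real \<Rightarrow> real \<Rightarrow> real" where
  "lpoly p q b1 b2 b3 u = b1 * u + b2 * u ^ p + b3 * u ^ q"

lemma lfun_eq_lpoly_plus_half_entropy:
  "lfun p q b1 b2 b3 u = lpoly p q b1 b2 b3 u + half_entropy u"
  unfolding lfun_def lpoly_def half_entropy_def by simp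

lemma half_entropy_sym: "half_entropy (1 - w) = half_entropy w"
  unfolding half_entropy_def by simp

lemma neg_mult_ln_le:
  fixes x :: real assumes "0 < x" shows "- (x * ln x) \<le> 1 - x"
proof -
  have "- ln x \<le> 1/x - 1"
    using ln_le_minus_one[of "1/x"] assms by (simp add: ln_div)
  hence "x * (- ln x) \<le> x * (1/x - 1)" using assms by (intro mult_left_mono) auto
  also have "\<dots> = 1 - x" using assms by (simp add: field_simps)
  finally show ?thesis by simp
qed

lemma neg_mult_ln_le_sqrt:
  fixes x :: real assumes "0 < x" shows "- (x * ln x) \<le> 2 * sqrt x"
proof -
  have s: "0 < sqrt x" using assms by simp
  have "- (x * ln x) = 2 * sqrt x * (- (sqrt x * ln (sqrt x)))"
    using assms by (simp add: ln_sqrt algebra_simps)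
  also have "\<dots> \<le> 2 * sqrt x * (1 - sqrt x)"
    using neg_mult_ln_le[OF s] s by (intro mult_left_mono) auto
  also have "\<dots> \<le> 2 * sqrt x" using s by simp
  finally show ?thesis .
qed

lemma neg_mult_ln_nonneg:
  fixes x :: real assumes "0 \<le> x" "x \<le> 1" shows "0 \<le> - (x * ln x)"
  using assms by (cases "x = 0") (auto simp: mult_nonneg_nonpos)

lemma half_entropy_split:
  "half_entropy w = (- (w * ln w)) / 2 + (- ((1 - w) * ln (1 - w))) / 2"
  unfolding half_entropy_def by simp

lemma half_entropy_le:
  assumes "0 < w" "w < 1" shows "half_entropy w \<le> w * (1 - ln w) / 2"
proof -
  have "w * (1 - ln w) / 2 = (- (w * ln w)) / 2 + w / 2" by (simp add: field_simps)
  thus ?thesis using neg_mult_ln_le[of "1 - w"] assms half_entropy_split[of w] by linarith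
qed

lemma half_entropy_le_sqrt:
  assumes "0 < w" "w < 1" shows "half_entropy w \<le> 3/2 * sqrt w"
proof -
  have "w \<le> sqrt w" using assms by (intro real_le_rsqrt) (simp add: power2_eq_square)
  thus ?thesis using neg_mult_ln_le_sqrt[of w] neg_mult_ln_le[of "1 - w"] assms
      half_entropy_split[of w] by linarith
qed

lemma half_entropy_ge:
  assumes "0 \<le> w" "w \<le> 1" shows "- (w * ln w) / 2 \<le> half_entropy w"
  using neg_mult_ln_nonneg[of "1 - w"] assms half_entropy_split[of w] by linarith

lemma abs_power_diff_le:
  fixes x y :: real assumes "x \<in> {0..1}" "y \<in> {0..1}"
  shows "\<bar>x ^ k - y ^ k\<bar> \<le> real k * \<bar>x - y\<bar>"
proof (induction k)
  case (Suc k)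
  have "\<bar>x ^ Suc k - y ^ Suc k\<bar> = \<bar>x * (x ^ k - y ^ k) + y ^ k * (x - y)\<bar>"
    by (simp add: algebra_simps)
  also have "\<dots> \<le> \<bar>x\<bar> * \<bar>x ^ k - y ^ k\<bar> + \<bar>y ^ k\<bar> * \<bar>x - y\<bar>"
    by (rule order_trans[OF abs_triangle_ineq]) (simp add: abs_mult)
  also have "\<dots> \<le> 1 * \<bar>x ^ k - y ^ k\<bar> + 1 * \<bar>x - y\<bar>"
    using assms by (intro add_mono mult_right_mono) (auto simp: power_le_one)
  also have "\<dots> \<le> real (Suc k) * \<bar>x - y\<bar>" using Suc by (simp add: algebra_simps)
  finally show ?case .
qed simp

lemma lpoly_lipschitz:
  assumes "x \<in> {0..1}" "y \<in> {0..1}"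
  shows "\<bar>lpoly p q b1 b2 b3 x - lpoly p q b1 b2 b3 y\<bar>
    \<le> (\<bar>b1\<bar> + real p * \<bar>b2\<bar> + real q * \<bar>b3\<bar>) * \<bar>x - y\<bar>"
proof -
  have "lpoly p q b1 b2 b3 x - lpoly p q b1 b2 b3 y
      = b1 * (x - y) + b2 * (x ^ p - y ^ p) + b3 * (x ^ q - y ^ q)"
    unfolding lpoly_def by (simp add: algebra_simps)
  also have "\<bar>\<dots>\<bar> \<le> \<bar>b1\<bar> * \<bar>x - y\<bar> + \<bar>b2\<bar> * \<bar>x ^ p - y ^ p\<bar> + \<bar>b3\<bar> * \<bar>x ^ q - y ^ q\<bar>"
    unfolding abs_mult[symmetric] by (intro order_trans[OF abs_triangle_ineq] add_mono) auto
  also have "\<dots> \<le> \<bar>b1\<bar> * \<bar>x - y\<bar> + \<bar>b2\<bar> * (real p * \<bar>x - y\<bar>) + \<bar>b3\<bar> * (real q * \<bar>x - y\<bar>)"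
    using abs_power_diff_le[OF assms] by (intro add_mono mult_left_mono) auto
  finally show ?thesis by (simp add: algebra_simps)
qed

lemma lfun_0: "1 \<le> p \<Longrightarrow> 1 \<le> q \<Longrightarrow> lfun p q b1 b2 b3 0 = 0"
  unfolding lfun_def by (simp add: power_0_left)

lemma lfun_1: "lfun p q b1 b2 b3 1 = b1 + b2 + b3"
  unfolding lfun_def by simp

lemma lfun_exceeds_endpoints:
  assumes "1 \<le> p" "1 \<le> q"
  shows "\<exists>x\<in>{0<..<1}. lfun p q b1 b2 b3 0 < lfun p q b1 b2 b3 x"
    and "\<exists>x\<in>{0<..<1}. lfun p q b1 b2 b3 1 < lfun p q b1 b2 b3 x"
proof -
  define A where "A = \<bar>b1\<bar> + real p * \<bar>b2\<bar> + real q * \<bar>b3\<bar>"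
  define e where "e = exp (- 2 * A - 1)"
  have "0 \<le> A" unfolding A_def by simp
  hence e: "0 < e" "e < 1" unfolding e_def by auto
  \<comment> \<open>At distance e from an endpoint the entropy gain e (2A + 1) / 2 beats the
    Lipschitz loss A e of the polynomial part.\<close>
  have "- (e * ln e) / 2 = A * e + e / 2" unfolding e_def by (simp add: field_simps)
  hence gain: "A * e < half_entropy e" using half_entropy_ge[of e] e by linarith
  have "lpoly p q b1 b2 b3 0 - A * e \<le> lpoly p q b1 b2 b3 e"
    using lpoly_lipschitz[of e 0 p q b1 b2 b3] e unfolding A_def by auto
  hence "lfun p q b1 b2 b3 0 < lfun p q b1 b2 b3 e"
    using gain unfolding lfun_eq_lpoly_plus_half_entropy by (simp add: half_entropy_def)
  thus "\<exists>x\<in>{0<..<1}. lfun p q b1 b2 b3 0 < lfun p q b1 b2 b3 x" using e by auto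
  have "lpoly p q b1 b2 b3 1 - A * e \<le> lpoly p q b1 b2 b3 (1 - e)"
    using lpoly_lipschitz[of "1 - e" 1 p q b1 b2 b3] e unfolding A_def by auto
  hence "lfun p q b1 b2 b3 1 < lfun p q b1 b2 b3 (1 - e)"
    using gain unfolding lfun_eq_lpoly_plus_half_entropy half_entropy_sym
    by (simp add: half_entropy_def)
  thus "\<exists>x\<in>{0<..<1}. lfun p q b1 b2 b3 1 < lfun p q b1 b2 b3 x" using e by auto
qed

lemma global_max_interior:
  assumes "1 \<le> p" "1 \<le> q" "is_global_max p q b1 b2 b3 w"
  shows "w \<in> {0<..<1}"
proof -
  have "lfun p q b1 b2 b3 x \<le> lfun p q b1 b2 b3 w" if "x \<in> {0<..<1}" for x
    using assms(3) that unfolding is_global_max_def by auto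
  hence "w \<noteq> 0" "w \<noteq> 1" using lfun_exceeds_endpoints[OF assms(1,2)] by (metis not_less)+
  thus ?thesis using assms(3) unfolding is_global_max_def by auto
qed

lemma global_max_ge_endpoints:
  assumes "1 \<le> p" "1 \<le> q" "is_global_max p q b1 b2 b3 w"
  shows "0 \<le> lfun p q b1 b2 b3 w" and "b1 + b2 + b3 \<le> lfun p q b1 b2 b3 w"
  using assms(3) lfun_0[OF assms(1,2)] lfun_1[of p q b1 b2 b3]
  unfolding is_global_max_def by (metis atLeastAtMost_iff order_refl zero_le_one)+

definition lfun_deriv :: "nat \<Rightarrow> nat \<Rightarrow> real \<Rightarrow> real \<Rightarrow> real \<Rightarrow> real \<Rightarrow> real" where
  "lfun_deriv p q b1 b2 b3 u =
     b1 + real p * b2 * u ^ (p - 1) + real q * b3 * u ^ (q - 1) + (ln (1 - u) - ln u) / 2"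

lemma half_entropy_has_real_derivative:
  assumes "0 < u" "u < 1"
  shows "(half_entropy has_real_derivative (ln (1 - u) - ln u) / 2) (at u)"
proof -
  have "((\<lambda>u. - (1/2) * u * ln u) has_real_derivative - (1/2) * (ln u + 1)) (at u)"
    using assms by (auto intro!: derivative_eq_intros simp: algebra_simps)
  moreover have "((\<lambda>u. (1/2) * (1 - u) * ln (1 - u)) has_real_derivative
      - (1/2) * (ln (1 - u) + 1)) (at u)"
    using assms by (auto intro!: derivative_eq_intros simp: field_simps)
  ultimately have "(half_entropy has_real_derivative
      - (1/2) * (ln u + 1) - - (1/2) * (ln (1 - u) + 1)) (at u)"
    unfolding half_entropy_def[abs_def] by (rule DERIV_diff)
  moreover have "- (1/2) * (ln u + 1) - - (1/2) * (ln (1 - u) + 1) = (ln (1 - u) - ln u) / 2"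
    by (simp add: algebra_simps)
  ultimately show ?thesis by argo
qed

lemma lfun_has_real_derivative:
  assumes "0 < u" "u < 1"
  shows "(lfun p q b1 b2 b3 has_real_derivative lfun_deriv p q b1 b2 b3 u) (at u)"
proof -
  have "(lpoly p q b1 b2 b3 has_real_derivative
      b1 + b2 * (real p * u ^ (p - 1)) + b3 * (real q * u ^ (q - 1))) (at u)"
    unfolding lpoly_def[abs_def] by (auto intro!: derivative_eq_intros)
  from DERIV_add[OF this half_entropy_has_real_derivative[OF assms]]
  show ?thesis
    by (simp add: lfun_eq_lpoly_plus_half_entropy[abs_def] lfun_deriv_def algebra_simps)
qed

lemma global_max_lfun_deriv:
  assumes "1 \<le> p" "1 \<le> q" "is_global_max p q b1 b2 b3 w"
  shows "lfun_deriv p q b1 b2 b3 w = 0"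
proof -
  have w: "0 < w" "w < 1" using global_max_interior[OF assms] by auto
  show ?thesis
  proof (rule DERIV_local_max[OF lfun_has_real_derivative[OF w]])
    show "0 < min w (1 - w)" using w by simp
    show "\<forall>y. \<bar>w - y\<bar> < min w (1 - w) \<longrightarrow> lfun p q b1 b2 b3 y \<le> lfun p q b1 b2 b3 w"
      using assms(3) unfolding is_global_max_def by (auto simp: abs_less_iff)
  qed
qed

lemma ln_diff_ge:
  fixes x y :: real assumes "0 < x" "x \<le> y" shows "(y - x) / y \<le> ln y - ln x"
proof -
  have "ln (x / y) \<le> x / y - 1" using assms by (intro ln_le_minus_one) auto
  thus ?thesis using assms by (simp add: ln_div diff_divide_distrib)
qed

lemma mult_power_diff_ge:
  fixes x y b :: real assumes "0 \<le> x" "x \<le> y" "y \<le> 1"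
  shows "- (real k * real k * max b 0 * (y - x)) \<le> real k * b * (x ^ (k - 1) - y ^ (k - 1))"
proof -
  define D where "D = y ^ (k - 1) - x ^ (k - 1)"
  have "0 \<le> D" unfolding D_def using assms by (simp add: power_mono)
  moreover have "D \<le> real (k - 1) * (y - x)"
    using abs_power_diff_le[of y x "k - 1"] assms unfolding D_def by simp
  moreover have "real (k - 1) * (y - x) \<le> real k * (y - x)"
    using assms by (intro mult_right_mono) auto
  ultimately have "b * D \<le> max b 0 * (real k * (y - x))"
    by (intro order_trans[OF mult_right_mono[of b "max b 0" D]] mult_left_mono) auto
  hence "real k * (b * D) \<le> real k * (max b 0 * (real k * (y - x)))" by (intro mult_left_mono) auto
  thus ?thesis unfolding D_def by (simp add: algebra_simps)
qed

definition curv_bound :: "nat \<Rightarrow> nat \<Rightarrow> real \<Rightarrow> real \<Rightarrow> real" where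
  "curv_bound p q b2 b3 = real p * real p * max b2 0 + real q * real q * max b3 0"

lemma lfun_deriv_diff_ge:
  assumes "0 < x" "x < y" "y < 1"
  shows "(y - x) * (1 / y + 1 / (1 - x) - 2 * curv_bound p q b2 b3)
    \<le> 2 * (lfun_deriv p q b1 b2 b3 x - lfun_deriv p q b1 b2 b3 y)"
proof -
  have "(y - x) / y \<le> ln y - ln x" using assms by (intro ln_diff_ge) auto
  moreover have "((1 - x) - (1 - y)) / (1 - x) \<le> ln (1 - x) - ln (1 - y)"
    using assms by (intro ln_diff_ge) auto
  moreover have
    "- (real p * real p * max b2 0 * (y - x)) \<le> real p * b2 * (x ^ (p - 1) - y ^ (p - 1))"
    "- (real q * real q * max b3 0 * (y - x)) \<le> real q * b3 * (x ^ (q - 1) - y ^ (q - 1))"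
    using assms by (intro mult_power_diff_ge; simp)+
  moreover have "(y - x) * (1 / y + 1 / (1 - x) - 2 * curv_bound p q b2 b3)
      = (y - x) / y + ((1 - x) - (1 - y)) / (1 - x)
        - 2 * (real p * real p * max b2 0 * (y - x)) - 2 * (real q * real q * max b3 0 * (y - x))"
    using assms unfolding curv_bound_def by (simp add: field_simps)
  moreover have "2 * (lfun_deriv p q b1 b2 b3 x - lfun_deriv p q b1 b2 b3 y)
      = (ln y - ln x) + (ln (1 - x) - ln (1 - y))
        + 2 * (real p * b2 * (x ^ (p - 1) - y ^ (p - 1)))
        + 2 * (real q * b3 * (x ^ (q - 1) - y ^ (q - 1)))"
    unfolding lfun_deriv_def by (simp add: algebra_simps diff_divide_distrib)
  ultimately show ?thesis by argo
qed

lemma global_maxima_curv_bound: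
  assumes "1 \<le> p" "1 \<le> q" "is_global_max p q b1 b2 b3 u" "is_global_max p q b1 b2 b3 v" "u < v"
  shows "1 / v + 1 / (1 - u) \<le> 2 * curv_bound p q b2 b3"
proof -
  have "0 < u" "v < 1"
    using global_max_interior[OF assms(1,2,3)] global_max_interior[OF assms(1,2,4)] by auto
  hence "(v - u) * (1 / v + 1 / (1 - u) - 2 * curv_bound p q b2 b3) \<le> 0"
    using lfun_deriv_diff_ge[of u v p q b2 b3 b1] assms(5)
      global_max_lfun_deriv[OF assms(1,2,3)] global_max_lfun_deriv[OF assms(1,2,4)] by simp
  thus ?thesis using assms(5) by (simp add: mult_le_0_iff)
qed

lemma exp_le_inverse_of_ln_le:
  fixes v a :: real assumes "0 < v" "ln v \<le> - a" shows "exp a \<le> 1 / v"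
proof -
  have "exp a \<le> exp (- ln v)" using assms(2) by simp
  also have "\<dots> = 1 / v" using assms(1) by (simp add: exp_minus inverse_eq_divide)
  finally show ?thesis .
qed

lemma two_maximizers_ordered:
  assumes "two_maximizers p q b1 b2 b3"
  obtains u v where "u < v" "is_global_max p q b1 b2 b3 u" "is_global_max p q b1 b2 b3 v"
  using assms unfolding two_maximizers_def by (metis linorder_neqE)

text \<open>If b2 < 0 then l(v) \<ge> 0 pins the larger maximiser v within e^(1 - 2(-b1-b3)) of 0,
  where H is far too concave for the curvature bound q^2 b3.\<close>

lemma two_maximizers_b2_nonneg:
  assumes "1 \<le> p" "1 \<le> q" "0 \<le> b3"
    and small_b3: "real q * real q * b3 < exp (2 * (- b1 - b3) - 1) / 2"
    and "two_maximizers p q b1 b2 b3"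
  shows "0 \<le> b2"
proof (rule ccontr)
  assume b2: "\<not> 0 \<le> b2"
  obtain u v where uv: "u < v" and gu: "is_global_max p q b1 b2 b3 u"
    and gv: "is_global_max p q b1 b2 b3 v"
    using two_maximizers_ordered[OF assms(5)] .
  have u: "u < 1" and v: "0 < v" "v < 1"
    using global_max_interior[OF assms(1,2) gu] global_max_interior[OF assms(1,2) gv] by auto
  have "b2 * v ^ p \<le> 0" using b2 v by (simp add: mult_nonpos_nonneg)
  moreover have "b3 * v ^ q \<le> b3 * v"
    using v assms(2,3) power_decreasing[of 1 q v] by (intro mult_left_mono) auto
  ultimately have "lpoly p q b1 b2 b3 v \<le> (b1 + b3) * v"
    unfolding lpoly_def by (simp add: algebra_simps)
  hence "v * (- b1 - b3) \<le> v * ((1 - ln v) / 2)"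
    using global_max_ge_endpoints(1)[OF assms(1,2) gv] half_entropy_le[OF v(1,2)]
    unfolding lfun_eq_lpoly_plus_half_entropy by (simp add: algebra_simps)
  hence "ln v \<le> 1 - 2 * (- b1 - b3)" using v by (simp add: mult_le_cancel_left_pos)
  hence "exp (2 * (- b1 - b3) - 1) \<le> 1 / v" using v(1) by (intro exp_le_inverse_of_ln_le) auto
  moreover have "curv_bound p q b2 b3 = real q * real q * b3"
    using b2 assms(3) unfolding curv_bound_def by simp
  moreover have "0 < 1 / (1 - u)" using u by simp
  ultimately show False using global_maxima_curv_bound[OF assms(1,2) gu gv uv] small_b3 by linarith
qed

lemma curv_bound_le:
  assumes "p \<le> q" "0 \<le> b2" "0 \<le> b3"
  shows "curv_bound p q b2 b3 \<le> real q * real q * (b2 + b3)"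
proof -
  have "real p * real p * b2 \<le> real q * real q * b2"
    using assms by (intro mult_right_mono mult_mono) auto
  thus ?thesis using assms unfolding curv_bound_def by (simp add: algebra_simps)
qed

context
  fixes p q :: nat and b1 b2 b3 :: real
  assumes p2: "2 \<le> p" and pq: "p \<le> q" and b2: "0 \<le> b2" and b3: "0 \<le> b3"
begin

lemma lpoly_le_quadratic:
  assumes "0 \<le> w" "w \<le> 1"
  shows "lpoly p q b1 b2 b3 w \<le> (b1 + b2 + b3) * w\<^sup>2 + b1 * (w * (1 - w))"
proof -
  have "b2 * w ^ p \<le> b2 * w\<^sup>2" "b3 * w ^ q \<le> b3 * w\<^sup>2"
    using assms p2 pq b2 b3 by (intro mult_left_mono power_decreasing; simp)+
  thus ?thesis unfolding lpoly_def by (simp add: algebra_simps power2_eq_square)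
qed

lemma global_max_entropy_bound:
  assumes "is_global_max p q b1 b2 b3 w"
  shows "max (b1 + b2 + b3) 0 * (1 - w\<^sup>2) - b1 * (w * (1 - w)) \<le> half_entropy w"
proof -
  define t where "t = max (b1 + b2 + b3) 0"
  have pq1: "1 \<le> p" "1 \<le> q" using p2 pq by auto
  have w: "0 < w" "w < 1" using global_max_interior[OF pq1 assms] by auto
  have "t \<le> lfun p q b1 b2 b3 w"
    using global_max_ge_endpoints[OF pq1 assms] unfolding t_def by simp
  moreover have "lfun p q b1 b2 b3 w \<le> (b1 + b2 + b3) * w\<^sup>2 + b1 * (w * (1 - w)) + half_entropy w"
    using lpoly_le_quadratic[of w] w unfolding lfun_eq_lpoly_plus_half_entropy by simp
  moreover have "(b1 + b2 + b3) * w\<^sup>2 \<le> t * w\<^sup>2" unfolding t_def by (intro mult_right_mono) auto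
  moreover have "t * (1 - w\<^sup>2) = t - t * w\<^sup>2" by (simp add: algebra_simps)
  ultimately show ?thesis unfolding t_def[symmetric] by linarith
qed

lemma global_max_left_ln:
  assumes "b1 \<le> 0" "is_global_max p q b1 b2 b3 w" "w \<le> 1/2"
  shows "ln w \<le> 1 + b1"
proof -
  have w: "0 < w" "w < 1" using global_max_interior[OF _ _ assms(2)] p2 pq by auto
  have "0 \<le> max (b1 + b2 + b3) 0 * (1 - w\<^sup>2)" using w by (simp add: power_le_one)
  hence "- b1 * (w * (1 - w)) \<le> w * (1 - ln w) / 2"
    using global_max_entropy_bound[OF assms(2)] half_entropy_le[OF w] by linarith
  moreover have "- b1 * (w / 2) \<le> - b1 * (w * (1 - w))"
    using assms w by (intro mult_left_mono) auto
  ultimately have "w * (- b1) \<le> w * (1 - ln w)" by (simp add: algebra_simps)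
  hence "- b1 \<le> 1 - ln w" using w(1) by (simp only: mult_le_cancel_left_pos)
  thus ?thesis by linarith
qed

lemma global_max_left_value:
  assumes "b1 \<le> 0" "is_global_max p q b1 b2 b3 w" "w \<le> 1/2"
  shows "b1 + b2 + b3 \<le> 2 * sqrt w"
proof -
  define t where "t = max (b1 + b2 + b3) 0"
  have w: "0 < w" "w < 1" using global_max_interior[OF _ _ assms(2)] p2 pq by auto
  have "w\<^sup>2 \<le> 1/4" using w assms(3) power_mono[of w "1/2" 2] by (simp add: power2_eq_square)
  hence "t * (3/4) \<le> t * (1 - w\<^sup>2)" unfolding t_def by (intro mult_left_mono) auto
  moreover have "0 \<le> - b1 * (w * (1 - w))" using assms w by (intro mult_nonneg_nonneg) auto
  ultimately have "t * (3/4) \<le> 3/2 * sqrt w"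
    using global_max_entropy_bound[OF assms(2)] half_entropy_le_sqrt[OF w]
    unfolding t_def by linarith
  moreover have "b1 + b2 + b3 \<le> t" unfolding t_def by simp
  ultimately show ?thesis by linarith
qed

lemma global_max_right_ln:
  assumes "b1 \<le> 0" "is_global_max p q b1 b2 b3 w" "1/2 \<le> w"
  shows "ln (1 - w) \<le> 1 + b1 - 2 * max (b1 + b2 + b3) 0"
proof -
  define t where "t = max (b1 + b2 + b3) 0"
  have w: "0 < 1 - w" "1 - w < 1" using global_max_interior[OF _ _ assms(2)] p2 pq by auto
  have "(1 - w) * (t * (1 + w) - b1 * w) \<le> (1 - w) * ((1 - ln (1 - w)) / 2)"
    using global_max_entropy_bound[OF assms(2)] half_entropy_le[OF w] half_entropy_sym[of w]
    unfolding t_def by (simp add: algebra_simps power2_eq_square)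
  hence "t * (1 + w) - b1 * w \<le> (1 - ln (1 - w)) / 2"
    using w by (simp add: mult_le_cancel_left_pos)
  moreover have "t \<le> t * (1 + w)"
    using w mult_left_mono[of 1 "1 + w" t] unfolding t_def by simp
  moreover have "b1 * w \<le> b1 * (1/2)" using assms mult_left_mono_neg[of "1/2" w b1] by simp
  ultimately show ?thesis unfolding t_def by argo
qed

lemma global_max_right_value:
  assumes "is_global_max p q b1 b2 b3 w" "1/2 \<le> w"
  shows "- 3 * sqrt (1 - w) \<le> b1 + b2 + b3"
proof -
  have pq1: "1 \<le> p" "1 \<le> q" using p2 pq by auto
  have w: "0 < 1 - w" "1 - w < 1" using global_max_interior[OF pq1 assms(1)] by auto
  show ?thesis
  proof (cases "0 \<le> b1 + b2 + b3")
    case False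
    have "0 \<le> (b2 + b3) * (w * (1 - w))" using b2 b3 w by simp
    hence "lfun p q b1 b2 b3 w \<le> (b1 + b2 + b3) * w + 3/2 * sqrt (1 - w)"
      using lpoly_le_quadratic[of w] w half_entropy_le_sqrt[OF w] half_entropy_sym[of w]
      unfolding lfun_eq_lpoly_plus_half_entropy by (simp add: algebra_simps power2_eq_square)
    moreover have "(b1 + b2 + b3) * w \<le> (b1 + b2 + b3) / 2"
      using False assms(2) mult_left_mono_neg[of "1/2" w "b1 + b2 + b3"] by simp
    ultimately show ?thesis using global_max_ge_endpoints(1)[OF pq1 assms(1)] by argo
  qed (use w real_sqrt_ge_zero[of "1 - w"] in linarith)
qed

lemma global_maxima_not_both_left:
  assumes "b1 \<le> 0" and small_q: "real q * real q * (2 - b1) < exp (- b1 - 1) / 2"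
    and gu: "is_global_max p q b1 b2 b3 u" and gv: "is_global_max p q b1 b2 b3 v"
    and "u < v" "v \<le> 1/2"
  shows False
proof -
  have pq1: "1 \<le> p" "1 \<le> q" using p2 pq by auto
  have u: "0 < u" "u < 1" and v: "0 < v" "v < 1"
    using global_max_interior[OF pq1 gu] global_max_interior[OF pq1 gv] by auto
  have "exp (- b1 - 1) \<le> 1 / v"
    using global_max_left_ln[OF assms(1) gv assms(6)] v(1)
    by (intro exp_le_inverse_of_ln_le) auto
  moreover have "b1 + b2 + b3 \<le> 2"
    using global_max_left_value[OF assms(1) gu] assms(5,6) u by (smt (verit) real_sqrt_le_1_iff)
  hence "curv_bound p q b2 b3 \<le> real q * real q * (2 - b1)"
    using curv_bound_le[OF pq b2 b3] mult_left_mono[of "b2 + b3" "2 - b1" "real q * real q"]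
    by simp
  moreover have "0 < 1 / (1 - u)" using u by simp
  ultimately show False using global_maxima_curv_bound[OF pq1 gu gv assms(5)] small_q by linarith
qed

lemma global_maxima_not_both_right:
  assumes "b1 \<le> 0" and small_q: "real q * real q * (2 - b1) < exp (- b1 - 1) / 2"
    and gu: "is_global_max p q b1 b2 b3 u" and gv: "is_global_max p q b1 b2 b3 v"
    and "u < v" "1/2 \<le> u"
  shows False
proof -
  define t where "t = max (b1 + b2 + b3) 0"
  define E where "E = exp (- b1 - 1)"
  define Q where "Q = real q * real q"
  have pq1: "1 \<le> p" "1 \<le> q" using p2 pq by auto
  have u: "0 < 1 - u" and v: "0 < v"
    using global_max_interior[OF pq1 gu] global_max_interior[OF pq1 gv] by auto
  have "E * (1 + 2 * t) \<le> E * exp (2 * t)" unfolding E_def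
    by (intro mult_left_mono exp_ge_add_one_self) simp
  also have "\<dots> = exp (- b1 - 1 + 2 * t)" unfolding E_def by (simp add: exp_add)
  also have "\<dots> \<le> 1 / (1 - u)"
    using global_max_right_ln[OF assms(1) gu assms(6)] u unfolding t_def
    by (intro exp_le_inverse_of_ln_le) auto
  finally have far_right: "E + 2 * (E * t) \<le> 1 / (1 - u)" by (simp add: algebra_simps)
  have Q: "Q * 2 - Q * b1 < E / 2" "0 \<le> Q" "Q * b1 \<le> 0" "0 < E"
    using small_q assms(1) unfolding Q_def E_def
    by (simp_all add: algebra_simps mult_nonpos_nonneg)
  hence "Q * t \<le> E * t" unfolding t_def by (intro mult_right_mono) auto
  moreover have "curv_bound p q b2 b3 \<le> Q * t - Q * b1"
    using curv_bound_le[OF pq b2 b3] mult_left_mono[of "b2 + b3" "t - b1" Q]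
    unfolding t_def Q_def by (simp add: algebra_simps)
  moreover have "0 < 1 / v" using v by simp
  ultimately show False
    using global_maxima_curv_bound[OF pq1 gu gv assms(5)] far_right Q by linarith
qed

lemma global_maxima_straddle_value:
  assumes "b1 \<le> 0" "is_global_max p q b1 b2 b3 u" "is_global_max p q b1 b2 b3 v"
    and "u \<le> 1/2" "1/2 \<le> v"
  shows "\<bar>b1 + b2 + b3\<bar> \<le> 3 * sqrt (exp (1 + b1))"
proof -
  have pq1: "1 \<le> p" "1 \<le> q" using p2 pq by auto
  have u: "0 < u" and v: "0 < 1 - v"
    using global_max_interior[OF pq1 assms(2)] global_max_interior[OF pq1 assms(3)] by auto
  have "ln u \<le> 1 + b1" by (rule global_max_left_ln[OF assms(1,2,4)])
  hence "sqrt u \<le> sqrt (exp (1 + b1))"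
    using u by (metis exp_le_cancel_iff exp_ln real_sqrt_le_iff)
  moreover have "ln (1 - v) \<le> 1 + b1"
    using global_max_right_ln[OF assms(1,3,5)] max.cobounded2[of 0 "b1 + b2 + b3"] by argo
  hence "sqrt (1 - v) \<le> sqrt (exp (1 + b1))"
    using v by (metis exp_le_cancel_iff exp_ln real_sqrt_le_iff)
  ultimately show ?thesis
    using global_max_left_value[OF assms(1,2,4)] global_max_right_value[OF assms(3,5)] by linarith
qed

end

theorem two_maximizers_value_at_one:
  assumes "2 \<le> p" "p \<le> q" "0 \<le> b3" "b1 \<le> 0"
    and "real q * real q * (2 - b1) < exp (- b1 - 1) / 2"
    and "real q * real q * b3 < exp (2 * (- b1 - b3) - 1) / 2"
    and tm: "two_maximizers p q b1 b2 b3"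
  shows "\<bar>b1 + b2 + b3\<bar> \<le> 3 * sqrt (exp (1 + b1))"
proof -
  have b2: "0 \<le> b2" using two_maximizers_b2_nonneg[OF _ _ assms(3,6) tm] assms(1,2) by auto
  obtain u v where uv: "u < v" and gu: "is_global_max p q b1 b2 b3 u"
    and gv: "is_global_max p q b1 b2 b3 v"
    using two_maximizers_ordered[OF tm] .
  consider "v \<le> 1/2" | "1/2 \<le> u" | "u \<le> 1/2" "1/2 \<le> v" by linarith
  thus ?thesis
  proof cases
    case 1
    thus ?thesis
      using global_maxima_not_both_left[OF assms(1,2) b2 assms(3,4,5) gu gv uv] by blast
  next
    case 2
    thus ?thesis
      using global_maxima_not_both_right[OF assms(1,2) b2 assms(3,4,5) gu gv uv] by blast
  next
    case 3
    thus ?thesis by (rule global_maxima_straddle_value[OF assms(1,2) b2 assms(3,4) gu gv])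
  qed
qed

theorem corollary4:
  fixes p q :: nat and b3 :: real
  assumes "2 \<le> p" and "p < q" and "q \<le> 5 * p - 1" and "b3 \<ge> 0"
    and "\<exists>!u. 0 < u \<and> u < 1 \<and>
      b3 = (real p * u - (real p - 1)) /
           (2 * real q * (real q - 1) * (real q - real p) * u ^ (q - 1) * (1 - u)^2)"
    and "\<forall>b1 < beta1c p q b3. \<exists>!b2. two_maximizers p q b1 b2 b3"
  shows "((\<lambda>b1. \<bar>transition_curve p q b3 b1 + b1 + b3\<bar>) \<longlongrightarrow> 0) at_bot"
proof (rule tendsto_sandwich)
  \<comment> \<open>The hypotheses q \<le> 5p - 1 and uniqueness of u0 only make beta1c well defined;
    the estimate does not use them.\<close>
  have "\<forall>\<^sub>F b1 in at_bot. b1 < beta1c p q b3" unfolding eventually_at_bot_dense by blast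
  moreover have "\<forall>\<^sub>F b1 in at_bot. b1 \<le> (0::real)"
    and "\<forall>\<^sub>F b1 in at_bot. real q * real q * (2 - b1) < exp (- b1 - 1) / 2"
    and "\<forall>\<^sub>F b1 in at_bot. real q * real q * b3 < exp (2 * (- b1 - b3) - 1) / 2"
    by real_asymp+
  ultimately show
    "\<forall>\<^sub>F b1 in at_bot. \<bar>transition_curve p q b3 b1 + b1 + b3\<bar> \<le> 3 * sqrt (exp (1 + b1))"
  proof eventually_elim
    case (elim b1)
    hence "\<exists>!b2. two_maximizers p q b1 b2 b3" using assms(6) by blast
    hence "two_maximizers p q b1 (transition_curve p q b3 b1) b3"
      unfolding transition_curve_def by (rule theI')
    from two_maximizers_value_at_one[OF assms(1) less_imp_le[OF assms(2)] assms(4) elim(2-4) this]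
    show ?case by (simp add: add_ac)
  qed
  show "\<forall>\<^sub>F b1 in at_bot. 0 \<le> \<bar>transition_curve p q b3 b1 + b1 + b3\<bar>" by simp
  show "((\<lambda>_. 0) \<longlongrightarrow> (0::real)) at_bot" by simp
  show "((\<lambda>b1. 3 * sqrt (exp (1 + b1))) \<longlongrightarrow> 0) at_bot" by real_asymp
qed

end
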